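(* Let $\langle S,L,\tau,\ell\rangle$ be a labelled Markov chain and $P\in\mathcal{P}_\tau$ an $S^2_\Delta$-closed policy. If $C$ is a closed communication class of the Markov chain $\langle S\times S,P\rangle$, then either $C=\{(s,t)\}$ for some $(s,t)\in S^2_1$, or $C\subseteq S^2_\Delta$, or $C\subseteq S^2_{0,\tau}$.
   Context: Labelled Markov chain: finite $S$, finite $L$, $\tau:S\to\mathcal{D}(S)$, $\ell:S\to L$. $\Omega(\mu,\nu)$ = couplings. $S^2_\Delta=\{(s,s)\}$, $S^2_1=\{(s,t)\mid\ell(s)\ne\ell(t)\}$, $S^2_{0,\tau}=\{(s,t)\mid s\ne t,\ s\sim t\}$ where $\sim$ is probabilistic bisimilarity (the union of all equivalence relations $R$ such that for $(s,t)\in R$, $\ell(s)=\ell(t)$ and some $\omega\in\Omega(\tau(s),\tau(t))$ has support in $R$). $\mathcal{P}_\tau$ = policies $P:S\times S\to\mathcal{D}(S\times S)$ with $P(s,t)\in\Omega(\tau(s),\tau(t))$ for $(s,t)\notin S^2_1$ and $P(s,t)$ the point mass at $(s,t)$ for $(s,t)\in S^2_1$. $P$ is $S^2_\Delta$-closed if $\mathrm{support}(P(s,s))\subseteq S^2_\Delta$ for all $s$. A communication class is an equivalence class of mutual reachability in $\langle S\times S,P\rangle$; it is closed if it cannot be left with positive probability. *)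

theory Defs
  imports "HOL-Probability.Probability"
begin

definition couplings :: "'a pmf \<Rightarrow> 'b pmf \<Rightarrow> ('a \<times> 'b) pmf set" where
  "couplings \<mu> \<nu> = {\<omega>. map_pmf fst \<omega> = \<mu> \<and> map_pmf snd \<omega> = \<nu>}"

definition prob_bisimulation :: "('s \<Rightarrow> 's pmf) \<Rightarrow> ('s \<Rightarrow> 'l) \<Rightarrow> ('s \<times> 's) set \<Rightarrow> bool" where
  "prob_bisimulation \<tau> lab R \<longleftrightarrow> equiv UNIV R \<and>
     (\<forall>(s,t)\<in>R. lab s = lab t \<and> (\<exists>\<omega>\<in>couplings (\<tau> s) (\<tau> t). set_pmf \<omega> \<subseteq> R))"

definition bisimilar :: "('s \<Rightarrow> 's pmf) \<Rightarrow> ('s \<Rightarrow> 'l) \<Rightarrow> ('s \<times> 's) set" where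
  "bisimilar \<tau> lab = \<Union>{R. prob_bisimulation \<tau> lab R}"

definition S2_Delta :: "('s \<times> 's) set" where
  "S2_Delta = {(s,s) | s. True}"

definition S2_1 :: "('s \<Rightarrow> 'l) \<Rightarrow> ('s \<times> 's) set" where
  "S2_1 lab = {(s,t). lab s \<noteq> lab t}"

definition S2_0 :: "('s \<Rightarrow> 's pmf) \<Rightarrow> ('s \<Rightarrow> 'l) \<Rightarrow> ('s \<times> 's) set" where
  "S2_0 \<tau> lab = {(s,t). s \<noteq> t \<and> (s,t) \<in> bisimilar \<tau> lab}"

definition policies :: "('s \<Rightarrow> 's pmf) \<Rightarrow> ('s \<Rightarrow> 'l) \<Rightarrow> ('s \<times> 's \<Rightarrow> ('s \<times> 's) pmf) set" where
  "policies \<tau> lab = {P. \<forall>s t.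
      ((s,t) \<notin> S2_1 lab \<longrightarrow> P (s,t) \<in> couplings (\<tau> s) (\<tau> t)) \<and>
      ((s,t) \<in> S2_1 lab \<longrightarrow> P (s,t) = return_pmf (s,t))}"

definition Delta_closed :: "('s \<times> 's \<Rightarrow> ('s \<times> 's) pmf) \<Rightarrow> bool" where
  "Delta_closed P \<longleftrightarrow> (\<forall>s. set_pmf (P (s,s)) \<subseteq> S2_Delta)"

definition mc_step :: "('a \<Rightarrow> 'a pmf) \<Rightarrow> ('a \<times> 'a) set" where
  "mc_step K = {(x,y). y \<in> set_pmf (K x)}"

definition comm_class :: "('a \<Rightarrow> 'a pmf) \<Rightarrow> 'a \<Rightarrow> 'a set" where
  "comm_class K x = {y. (x,y) \<in> (mc_step K)\<^sup>* \<and> (y,x) \<in> (mc_step K)\<^sup>*}"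

definition is_comm_class :: "('a \<Rightarrow> 'a pmf) \<Rightarrow> 'a set \<Rightarrow> bool" where
  "is_comm_class K C \<longleftrightarrow> (\<exists>x. C = comm_class K x)"

definition closed_class :: "('a \<Rightarrow> 'a pmf) \<Rightarrow> 'a set \<Rightarrow> bool" where
  "closed_class K C \<longleftrightarrow> (\<forall>x\<in>C. set_pmf (K x) \<subseteq> C)"

end

theory Submission
  imports Defs
begin

text \<open>
  Every pair of a communication class reaches every other one, so the class lies inside any
  closed set containing one of its pairs. A pair with distinct labels is absorbing, and the
  diagonal is closed because the policy is diagonal-closed. Otherwise all pairs of the class
  carry equal labels and, the class being closed, the policy couples their successor
  distributions inside the class; then the equivalence closure of the class is a
  probabilistic bisimulation, so the class consists of bisimilar pairs off the diagonal.
\<close>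

lemma ex_coupling_iff_rel_pmf:
  "(\<exists>\<omega>\<in>couplings \<mu> \<nu>. set_pmf \<omega> \<subseteq> R) \<longleftrightarrow> rel_pmf (\<lambda>a b. (a, b) \<in> R) \<mu> \<nu>"
  by (auto simp: couplings_def pmf.in_rel)

lemma equiv_equiv_closure: "equiv UNIV ((R \<union> R\<inverse>)\<^sup>*)"
  by (simp add: equiv_def refl_rtrancl sym_rtrancl sym_Un_converse trans_rtrancl)

lemma prob_bisimulation_equiv_closure:
  assumes R: "\<And>s t. (s, t) \<in> R \<Longrightarrow>
      lab s = lab t \<and> rel_pmf (\<lambda>a b. (a, b) \<in> (R \<union> R\<inverse>)\<^sup>*) (\<tau> s) (\<tau> t)"
  shows "prob_bisimulation \<tau> lab ((R \<union> R\<inverse>)\<^sup>*)"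
proof -
  define E where "E = (R \<union> R\<inverse>)\<^sup>*"
  \<comment> \<open>Lifting an equivalence to distributions gives an equivalence, so \<open>B\<close> is an
    equivalence relation containing \<open>R\<close>, hence containing its equivalence closure.\<close>
  define B where "B = {(s, t). lab s = lab t \<and> rel_pmf (\<lambda>a b. (a, b) \<in> E) (\<tau> s) (\<tau> t)}"
  have "equivp (\<lambda>a b. (a, b) \<in> E)"
    using equiv_equiv_closure unfolding E_def equivp_equiv .
  then have "reflp (rel_pmf (\<lambda>a b. (a, b) \<in> E))" "symp (rel_pmf (\<lambda>a b. (a, b) \<in> E))"
    "transp (rel_pmf (\<lambda>a b. (a, b) \<in> E))"
    by (simp_all add: equivp_reflp_symp_transp pmf.rel_reflp pmf.rel_symp pmf.rel_transp)
  then have "refl B" "sym B" "trans B"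
    unfolding B_def by (auto intro!: reflI symI transI dest: reflpD sympD transpD)
  moreover have "R \<subseteq> B"
    using R unfolding B_def E_def by auto
  ultimately have "R \<union> R\<inverse> \<subseteq> B"
    by (auto dest: symD)
  have "E \<subseteq> B"
  proof (rule subrelI)
    fix s t assume "(s, t) \<in> E"
    then show "(s, t) \<in> B"
      unfolding E_def using \<open>R \<union> R\<inverse> \<subseteq> B\<close> \<open>refl B\<close> \<open>trans B\<close>
      by (induction rule: rtrancl_induct) (auto dest: refl_onD transD)
  qed
  then show ?thesis
    using equiv_equiv_closure[of R]
    unfolding prob_bisimulation_def E_def[symmetric]
    by (auto simp: ex_coupling_iff_rel_pmf B_def)
qed

lemma rtrancl_mc_step_closed_class:
  assumes "closed_class K A" "x \<in> A" "(x, y) \<in> (mc_step K)\<^sup>*"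
  shows "y \<in> A"
  using assms(3,2)
  by (induction rule: rtrancl_induct) (use assms(1) in \<open>auto simp: closed_class_def mc_step_def\<close>)

lemma comm_class_subset_closed_class:
  assumes "is_comm_class K C" "x \<in> C" "closed_class K A" "x \<in> A"
  shows "C \<subseteq> A"
proof
  fix y assume "y \<in> C"
  from assms(1) obtain z where "C = comm_class K z"
    unfolding is_comm_class_def by blast
  with \<open>x \<in> C\<close> \<open>y \<in> C\<close> have "(x, z) \<in> (mc_step K)\<^sup>*" "(z, y) \<in> (mc_step K)\<^sup>*"
    unfolding comm_class_def by auto
  then have "(x, y) \<in> (mc_step K)\<^sup>*"
    by (rule rtrancl_trans)
  then show "y \<in> A"
    by (rule rtrancl_mc_step_closed_class[OF assms(3,4)])
qed

lemma closed_class_S2_1_singleton: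
  assumes "P \<in> policies \<tau> lab" "(s, t) \<in> S2_1 lab"
  shows "closed_class P {(s, t)}"
  using assms unfolding policies_def closed_class_def by auto

lemma Delta_closed_iff_closed_class: "Delta_closed P \<longleftrightarrow> closed_class P S2_Delta"
  by (auto simp: Delta_closed_def closed_class_def S2_Delta_def)

lemma closed_class_subset_bisimilar:
  assumes P: "P \<in> policies \<tau> lab" and C: "closed_class P C" "C \<inter> S2_1 lab = {}"
  shows "C \<subseteq> bisimilar \<tau> lab"
proof -
  have "lab s = lab t \<and> rel_pmf (\<lambda>a b. (a, b) \<in> (C \<union> C\<inverse>)\<^sup>*) (\<tau> s) (\<tau> t)"
    if "(s, t) \<in> C" for s t
  proof -
    from that C have "(s, t) \<notin> S2_1 lab" "set_pmf (P (s, t)) \<subseteq> (C \<union> C\<inverse>)\<^sup>*"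
      unfolding closed_class_def by auto
    moreover from this(1) P have "P (s, t) \<in> couplings (\<tau> s) (\<tau> t)"
      unfolding policies_def by blast
    ultimately show ?thesis
      unfolding S2_1_def ex_coupling_iff_rel_pmf[symmetric] by auto
  qed
  then have "prob_bisimulation \<tau> lab ((C \<union> C\<inverse>)\<^sup>*)"
    by (rule prob_bisimulation_equiv_closure)
  then show ?thesis
    unfolding bisimilar_def by blast
qed

theorem mainTheorem15:
  fixes \<tau> :: "'s::finite \<Rightarrow> 's pmf" and lab :: "'s \<Rightarrow> 'l::finite"
    and P :: "'s \<times> 's \<Rightarrow> ('s \<times> 's) pmf" and C :: "('s \<times> 's) set"
  assumes "P \<in> policies \<tau> lab"
    and "Delta_closed P"
    and "is_comm_class P C"
    and "closed_class P C"
  shows "(\<exists>s t. (s,t) \<in> S2_1 lab \<and> C = {(s,t)}) \<or> C \<subseteq> S2_Delta \<or> C \<subseteq> S2_0 \<tau> lab"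
proof -
  consider (labels_differ) s t where "(s, t) \<in> C" "(s, t) \<in> S2_1 lab"
    | (diagonal) s where "(s, s) \<in> C"
    | (off_diagonal) "C \<inter> S2_1 lab = {}" "C \<inter> S2_Delta = {}"
    unfolding S2_Delta_def by fast
  then show ?thesis
  proof cases
    case labels_differ
    have "C \<subseteq> {(s, t)}"
      using comm_class_subset_closed_class[OF assms(3) labels_differ(1)]
        closed_class_S2_1_singleton[OF assms(1) labels_differ(2)] by simp
    with labels_differ have "C = {(s, t)}" by blast
    with labels_differ show ?thesis by blast
  next
    case diagonal
    have "C \<subseteq> S2_Delta"
      using comm_class_subset_closed_class[OF assms(3) diagonal] assms(2)
      by (simp add: Delta_closed_iff_closed_class S2_Delta_def)
    then show ?thesis by blast
  next
    case off_diagonal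
    have "C \<subseteq> S2_0 \<tau> lab"
      using closed_class_subset_bisimilar[OF assms(1,4) off_diagonal(1)] off_diagonal(2)
      unfolding S2_0_def S2_Delta_def by blast
    then show ?thesis by blast
  qed
qed

end
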